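(* Let $\theta^*\in\mathbb{R}$. Consider the Dirichlet process mixture model with Gaussian kernel $k(\cdot\mid\theta)=\mathrm{N}(\theta,1)$, base measure $Q_0=\mathrm{N}(0,1)$, and prior $\pi$ on the concentration parameter satisfying A1, A2 and A3 with some $\rho>16$. Let the data be constant, $X_i=\theta^*$ for all $i$ (i.e. i.i.d. from $P=\delta_{\theta^*}$, with joint law $P^{(\infty)}$). Then $\mathrm{pr}(K_n=1\mid X_{1:n})\to1$ $P^{(\infty)}$-almost surely as $n\to\infty$.
   Context: Model: $\alpha\sim\pi$, $\tilde P\mid\alpha\sim\mathrm{DP}(\alpha,Q_0)$ with $Q_0$ having density $q_0$, $\theta_i\mid\tilde P$ i.i.d. $\tilde P$, $X_i\mid\theta_i\sim k(\cdot\mid\theta_i)$ independently. $K_n$ is the number of distinct values among $\theta_1,\dots,\theta_n$. With $\tau_s(n)$ the set of partitions of $\{1,\dots,n\}$ into $s$ nonempty blocks $A_1,\dots,A_s$, $a_j=|A_j|$, $\alpha^{(n)}=\alpha(\alpha+1)\cdots(\alpha+n-1)$, and $m(x_B)=\int\prod_{i\in B}k(x_i\mid\theta)q_0(\theta)d\theta$, the posterior is $\mathrm{pr}(K_n=s\mid X_{1:n})=W_s/\sum_{r=1}^nW_r$ with $W_s=\int_0^\infty\frac{\alpha^s}{\alpha^{(n)}}\pi(d\alpha)\sum_{A\in\tau_s(n)}\prod_j(a_j-1)!\,m(X_{A_j})$. (A1) $\pi$ has a Lebesgue density, also denoted $\pi$; (A2) there exist $\epsilon,\delta,\beta$ with $\frac1\delta\alpha^\beta\le\pi(\alpha)\le\delta\alpha^\beta$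 for all $\alpha\in(0,\epsilon)$; (A3) there exist $D,\nu,\rho>0$ with $\int\alpha^s\pi(\alpha)d\alpha<D\rho^{-s}\Gamma(\nu+s+1)$ for every integer $s\ge1$. *)

theory Defs
  imports "HOL-Probability.Probability" "HOL-Library.Disjoint_Sets"
begin

definition kern :: "real \<Rightarrow> real \<Rightarrow> real" where
  "kern x \<theta> = normal_density \<theta> 1 x"

definition q0 :: "real \<Rightarrow> real" where
  "q0 \<theta> = std_normal_density \<theta>"

definition marg :: "(nat \<Rightarrow> real) \<Rightarrow> nat set \<Rightarrow> real" where
  "marg X B = (LINT \<theta>|lborel. (\<Prod>i\<in>B. kern (X i) \<theta>) * q0 \<theta>)"

definition tau :: "nat \<Rightarrow> nat \<Rightarrow> nat set set set" where
  "tau s n = {P. partition_on {1..n} P \<and> card P = s}"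

definition W :: "(real \<Rightarrow> real) \<Rightarrow> (nat \<Rightarrow> real) \<Rightarrow> nat \<Rightarrow> nat \<Rightarrow> real" where
  "W \<pi> X n s =
     (LINT \<alpha>:{0<..}|lborel. \<alpha> ^ s / pochhammer \<alpha> n * \<pi> \<alpha>) *
     (\<Sum>P\<in>tau s n. \<Prod>A\<in>P. fact (card A - 1) * marg X A)"

definition post_K :: "(real \<Rightarrow> real) \<Rightarrow> (nat \<Rightarrow> real) \<Rightarrow> nat \<Rightarrow> nat \<Rightarrow> real" where
  "post_K \<pi> X n s = W \<pi> X n s / (\<Sum>r=1..n. W \<pi> X n r)"

end

theory Submission
  imports Defs "HOL-Combinatorics.Multiset_Permutations"
begin

text \<open>For constant data X_i = theta, a block A of a partition contributes
  (|A| - 1)! m(X_A) = exp (- |A| theta^2 / (2 (|A| + 1))) * block_weight c |A| with c = 1 / sqrt (2 pi)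
  and block_weight c a = (a - 1)! c^a / sqrt (a + 1). Because a powr (-3/2) is subconvolutive,
  summing over ordered partitions shows that the partitions into s >= 2 blocks weigh at most
  16^(s - 1) / s! times the one-block partition. Hence 1 - pr(K_n = 1 | X) is at most
  sum_(s >= 2) 16^(s - 1) / s! * I_n(s - 1) / I_n(0), where I_n(k) is the integral of
  alpha^k pi(alpha) / (alpha + 1)^((n - 1)) (rising factorial). Split these integrals at a small eta:
  below eta the weights sum to at most 16 eta exp (16 eta); above eta the integrand is bounded by
  alpha exp (16 alpha) pi(alpha) / (eta + 1)^((n - 1)), integrable because rho > 16, whereas
  I_n(0) >= pi(0, eta / 2) / (eta / 2 + 1)^((n - 1)). The ratio of these two rising factorials is
  at most exp (- eta H_(n - 1) / 4), which tends to 0.\<close>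

section \<open>Ordered set partitions\<close>

definition ordered_partitions :: "nat \<Rightarrow> 'a set \<Rightarrow> 'a set list set" where
  "ordered_partitions r S = {xs. distinct xs \<and> length xs = r \<and> partition_on S (set xs)}"

lemma finite_ordered_partitions: "finite S \<Longrightarrow> finite (ordered_partitions r S)"
proof -
  assume "finite S"
  have "ordered_partitions r S \<subseteq> {xs. set xs \<subseteq> Pow S \<and> length xs = r}"
    by (auto simp: ordered_partitions_def partition_on_def)
  moreover have "finite {xs. set xs \<subseteq> Pow S \<and> length xs = r}"
    using \<open>finite S\<close> by (intro finite_lists_length_eq) auto
  ultimately show ?thesis by (rule finite_subset)
qed

lemma sum_ordered_partitions:
  fixes f :: "'a set set \<Rightarrow> real"
  assumes S: "finite S"
  shows "(\<Sum>xs\<in>ordered_partitions r S. f (set xs))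
       = fact r * (\<Sum>P\<in>{P. partition_on S P \<and> card P = r}. f P)"
proof -
  let ?T = "{P. partition_on S P \<and> card P = r}"
  have fT: "finite ?T"
    by (rule finite_subset[OF _ finitely_many_partition_on[OF S]]) auto
  have img: "set ` ordered_partitions r S \<subseteq> ?T"
    by (auto simp: ordered_partitions_def distinct_card)
  have "(\<Sum>xs\<in>ordered_partitions r S. f (set xs))
      = (\<Sum>P\<in>?T. \<Sum>xs | xs \<in> ordered_partitions r S \<and> set xs = P. f (set xs))"
    by (rule sum.group[symmetric, OF finite_ordered_partitions[OF S] fT img])
  also have "\<dots> = (\<Sum>P\<in>?T. fact r * f P)"
  proof (rule sum.cong[OF refl])
    fix P assume P: "P \<in> ?T"
    have "finite P" using finite_elements[OF S] P by auto
    have "{xs. xs \<in> ordered_partitions r S \<and> set xs = P} = permutations_of_set P"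
      using P by (auto simp: ordered_partitions_def permutations_of_set_def distinct_card)
    then have "(\<Sum>xs | xs \<in> ordered_partitions r S \<and> set xs = P. f (set xs))
        = (\<Sum>xs\<in>permutations_of_set P. f P)"
      by (auto intro: sum.cong simp: permutations_of_set_def)
    also have "\<dots> = fact r * f P" using P \<open>finite P\<close> by simp
    finally show "(\<Sum>xs | xs \<in> ordered_partitions r S \<and> set xs = P. f (set xs)) = fact r * f P" .
  qed
  also have "\<dots> = fact r * (\<Sum>P\<in>?T. f P)" by (simp add: sum_distrib_left)
  finally show ?thesis .
qed

lemma ordered_partitions_Suc:
  "ordered_partitions (Suc r) S
     = (\<lambda>(B, ys). B # ys) ` (SIGMA B:{B. B \<subseteq> S \<and> B \<noteq> {}}. ordered_partitions r (S - B))"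
proof (intro set_eqI iffI)
  fix xs assume xs: "xs \<in> ordered_partitions (Suc r) S"
  then obtain B ys where xs_eq: "xs = B # ys" by (cases xs) (auto simp: ordered_partitions_def)
  have d: "distinct (B # ys)" and l: "length ys = r" and p: "partition_on S (insert B (set ys))"
    using xs xs_eq by (auto simp: ordered_partitions_def)
  have "disjoint (insert B (set ys))" using p partition_onD2 by blast
  then have "disjnt B (\<Union>(set ys))" using d by (auto simp: disjnt_def pairwise_def)
  from p partition_on_insert[OF this] have "partition_on (S - B) (set ys)" "B \<subseteq> S" "B \<noteq> {}"
    by auto
  then show "xs \<in> (\<lambda>(B, ys). B # ys) ` (SIGMA B:{B. B \<subseteq> S \<and> B \<noteq> {}}. ordered_partitions r (S - B))"
    using xs_eq d l by (auto simp: ordered_partitions_def intro!: image_eqI[of _ _ "(B, ys)"])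
next
  fix xs
  assume "xs \<in> (\<lambda>(B, ys). B # ys) ` (SIGMA B:{B. B \<subseteq> S \<and> B \<noteq> {}}. ordered_partitions r (S - B))"
  then obtain B ys where xs_eq: "xs = B # ys" and B: "B \<subseteq> S" "B \<noteq> {}"
    and ys: "ys \<in> ordered_partitions r (S - B)"
    by auto
  have p: "partition_on (S - B) (set ys)" using ys by (simp add: ordered_partitions_def)
  have U: "\<Union>(set ys) = S - B" using partition_onD1[OF p] by simp
  then have "disjnt B (\<Union>(set ys))" by (auto simp: disjnt_def)
  then have "partition_on S (insert B (set ys))" using partition_on_insert p B by auto
  moreover have "B \<notin> set ys" using U B by auto
  ultimately show "xs \<in> ordered_partitions (Suc r) S"
    using xs_eq ys by (auto simp: ordered_partitions_def)
qed

lemma ordered_partitions_empty: "r \<ge> 1 \<Longrightarrow> ordered_partitions r {} = {}"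
  by (auto simp: ordered_partitions_def partition_on_empty)

lemma ordered_partitions_1: "S \<noteq> {} \<Longrightarrow> ordered_partitions 1 S = {[S]}"
proof (intro set_eqI iffI)
  fix xs assume "xs \<in> ordered_partitions 1 S"
  then obtain B where "xs = [B]" "partition_on S {B}"
    by (auto simp: ordered_partitions_def length_Suc_conv)
  then show "xs \<in> {[S]}" using partition_onD1 by fastforce
next
  fix xs assume "S \<noteq> {}" "xs \<in> {[S]}"
  then show "xs \<in> ordered_partitions 1 S" by (auto simp: ordered_partitions_def partition_on_space)
qed

lemma sum_prod_ordered_partitions_Suc:
  fixes f :: "'a set \<Rightarrow> real"
  assumes S: "finite S"
  shows "(\<Sum>xs\<in>ordered_partitions (Suc r) S. \<Prod>A\<in>set xs. f A)
       = (\<Sum>B | B \<subseteq> S \<and> B \<noteq> {}. f B * (\<Sum>ys\<in>ordered_partitions r (S - B). \<Prod>A\<in>set ys. f A))"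
proof -
  let ?Bs = "{B. B \<subseteq> S \<and> B \<noteq> {}}"
  have inj: "inj_on (\<lambda>(B, ys). B # ys) (SIGMA B:?Bs. ordered_partitions r (S - B))"
    by (auto simp: inj_on_def)
  have fin: "finite ?Bs" by (rule finite_subset[of _ "Pow S"]) (auto simp: S)
  have head_new: "(\<Prod>A\<in>set (B # ys). f A) = f B * (\<Prod>A\<in>set ys. f A)"
    if "B \<in> ?Bs" "ys \<in> ordered_partitions r (S - B)" for B ys
  proof -
    have "B \<notin> set ys"
      using that by (auto simp: ordered_partitions_def partition_on_def)
    then show ?thesis by simp
  qed
  have "(\<Sum>xs\<in>ordered_partitions (Suc r) S. \<Prod>A\<in>set xs. f A)
      = (\<Sum>(B, ys)\<in>(SIGMA B:?Bs. ordered_partitions r (S - B)). \<Prod>A\<in>set (B # ys). f A)"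
    unfolding ordered_partitions_Suc by (subst sum.reindex[OF inj]) (simp add: case_prod_beta)
  also have "\<dots> = (\<Sum>B\<in>?Bs. \<Sum>ys\<in>ordered_partitions r (S - B). \<Prod>A\<in>set (B # ys). f A)"
    using fin S by (intro sum.Sigma[symmetric]) (auto intro: finite_ordered_partitions)
  also have "\<dots> = (\<Sum>B\<in>?Bs. f B * (\<Sum>ys\<in>ordered_partitions r (S - B). \<Prod>A\<in>set ys. f A))"
    unfolding sum_distrib_left by (intro sum.cong refl head_new)
  finally show ?thesis .
qed

lemma sum_proper_subsets_card:
  fixes g :: "nat \<Rightarrow> real"
  assumes S: "finite S"
  shows "(\<Sum>B | B \<subseteq> S \<and> B \<noteq> {} \<and> B \<noteq> S. g (card B))
       = (\<Sum>a\<in>{1..<card S}. real (card S choose a) * g a)"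
proof -
  let ?U = "{B. B \<subseteq> S \<and> B \<noteq> {} \<and> B \<noteq> S}"
  have fU: "finite ?U" by (rule finite_subset[of _ "Pow S"]) (auto simp: S)
  have img: "card ` ?U \<subseteq> {1..<card S}"
  proof
    fix x assume "x \<in> card ` ?U"
    then obtain B where B: "B \<subseteq> S" "B \<noteq> {}" "B \<noteq> S" "x = card B" by auto
    have "card B < card S" using B S by (meson psubset_card_mono psubsetI)
    moreover have "card B \<ge> 1" using B S by (metis One_nat_def Suc_leI card_gt_0_iff finite_subset)
    ultimately show "x \<in> {1..<card S}" using B by auto
  qed
  have "(\<Sum>B\<in>?U. g (card B)) = (\<Sum>a\<in>{1..<card S}. \<Sum>B | B \<in> ?U \<and> card B = a. g (card B))"
    by (rule sum.group[symmetric, OF fU _ img]) simp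
  also have "\<dots> = (\<Sum>a\<in>{1..<card S}. real (card S choose a) * g a)"
  proof (rule sum.cong[OF refl])
    fix a assume a: "a \<in> {1..<card S}"
    have "{B. B \<in> ?U \<and> card B = a} = {B. B \<subseteq> S \<and> card B = a}"
      using a by auto
    then show "(\<Sum>B | B \<in> ?U \<and> card B = a. g (card B)) = real (card S choose a) * g a"
      using n_subsets[OF S, of a] by simp
  qed
  finally show ?thesis .
qed


section \<open>A subconvolutive weight\<close>

(* decay a is of order a powr (-3/2); such weights are subconvolutive. *)
definition decay :: "nat \<Rightarrow> real" where
  "decay a = 1 / (real a * sqrt (real a + 1))"

lemma decay_nonneg: "decay a \<ge> 0"
  by (simp add: decay_def)

lemma decay_le_decay_add:
  assumes "1 \<le> a" "a \<le> b"
  shows "decay b \<le> 2 * sqrt 2 * decay (a + b)"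
proof -
  have "sqrt (real a + real b + 1) \<le> sqrt (2 * (real b + 1))"
    using assms by (intro real_sqrt_le_mono) simp
  also have "\<dots> = sqrt 2 * sqrt (real b + 1)" by (rule real_sqrt_mult)
  finally have "(real a + real b) * sqrt (real a + real b + 1)
      \<le> (2 * real b) * (sqrt 2 * sqrt (real b + 1))"
    using assms by (intro mult_mono) auto
  then have key: "(real a + real b) * sqrt (real a + real b + 1)
      \<le> 2 * sqrt 2 * (real b * sqrt (real b + 1))"
    by (simp add: algebra_simps)
  have "real b * sqrt (real b + 1) > 0" "(real a + real b) * sqrt (real a + real b + 1) > 0"
    using assms by (simp_all add: add_pos_nonneg)
  with key have "1 / (real b * sqrt (real b + 1))
      \<le> 2 * sqrt 2 / ((real a + real b) * sqrt (real a + real b + 1))"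
    by (simp add: divide_simps)
  then show ?thesis by (simp add: decay_def add.commute add.left_commute)
qed

lemma decay_mult_le:
  assumes "1 \<le> a" "1 \<le> b"
  shows "decay a * decay b \<le> 2 * sqrt 2 * (decay a + decay b) * decay (a + b)"
proof (cases "a \<le> b")
  case True
  have "decay a * decay b \<le> decay a * (2 * sqrt 2 * decay (a + b))"
    by (intro mult_left_mono decay_le_decay_add assms True decay_nonneg)
  also have "\<dots> \<le> 2 * sqrt 2 * (decay a + decay b) * decay (a + b)"
    using decay_nonneg[of b] decay_nonneg[of "a + b"] by (simp add: algebra_simps)
  finally show ?thesis .
next
  case False
  have "decay a * decay b \<le> decay b * (2 * sqrt 2 * decay (b + a))"
    using False assms by (subst mult.commute, intro mult_left_mono decay_le_decay_add decay_nonneg) auto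
  also have "\<dots> \<le> 2 * sqrt 2 * (decay a + decay b) * decay (a + b)"
    using decay_nonneg[of a] decay_nonneg[of "a + b"] by (simp add: algebra_simps)
  finally show ?thesis .
qed

lemma decay_le_telescoping:
  assumes "x \<ge> 1"
  shows "decay x \<le> 2 * sqrt 2 * (1 / sqrt (real x) - 1 / sqrt (real x + 1))"
proof -
  define s where "s = sqrt (real x)"
  define u where "u = sqrt (real x + 1)"
  have s0: "s > 0" using assms by (simp add: s_def)
  have u0: "u > 0" by (simp add: u_def add_pos_nonneg)
  have ss: "s * s = real x" by (simp add: s_def)
  have uu: "u * u = real x + 1" by (simp add: u_def add_pos_nonneg)
  have "u \<le> sqrt (2 * real x)" unfolding u_def using assms by (intro real_sqrt_le_mono) simp
  then have "u \<le> sqrt 2 * s" by (simp add: real_sqrt_mult s_def)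
  moreover have "s \<le> sqrt 2 * s" using s0 by simp
  ultimately have "u + s \<le> 2 * sqrt 2 * s" by linarith
  then have "s * u * (u + s) \<le> s * u * (2 * sqrt 2 * s)"
    using s0 u0 by (intro mult_left_mono) auto
  have "(u - s) * (u + s) = 1" using ss uu by (simp add: algebra_simps)
  then have "u - s = 1 / (u + s)" using s0 u0 by (simp add: field_simps)
  moreover have "1 / s - 1 / u = (u - s) / (s * u)" using s0 u0 by (simp add: field_simps)
  ultimately have diff: "1 / s - 1 / u = 1 / (s * u * (u + s))" by simp
  have "decay x = 1 / (s * s * u)" by (simp add: decay_def ss u_def)
  also have "\<dots> = 2 * sqrt 2 / (s * u * (2 * sqrt 2 * s))" using s0 u0 by (simp add: field_simps)
  also have "\<dots> \<le> 2 * sqrt 2 / (s * u * (u + s))"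
    using \<open>s * u * (u + s) \<le> s * u * (2 * sqrt 2 * s)\<close> s0 u0 by (intro divide_left_mono) auto
  also have "\<dots> = 2 * sqrt 2 * (1 / s - 1 / u)" by (simp add: diff)
  finally show ?thesis by (simp add: s_def u_def)
qed

lemma sum_decay_le: "(\<Sum>a\<in>{1..<n}. decay a) \<le> 2 * sqrt 2"
proof -
  have telescope: "(\<Sum>a\<in>{1..N}. decay a) \<le> 2 * sqrt 2 - 2 * sqrt 2 / sqrt (real N + 1)" for N
  proof (induction N)
    case (Suc N)
    have "(\<Sum>a\<in>{1..Suc N}. decay a) \<le> (2 * sqrt 2 - 2 * sqrt 2 / sqrt (real N + 1))
         + 2 * sqrt 2 * (1 / sqrt (real (Suc N)) - 1 / sqrt (real (Suc N) + 1))"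
      using Suc.IH decay_le_telescoping[of "Suc N"] by simp
    then show ?case by (simp add: algebra_simps add.commute)
  qed simp
  have "(\<Sum>a\<in>{1..<n}. decay a) \<le> (\<Sum>a\<in>{1..n}. decay a)"
    by (intro sum_mono2) (auto simp: decay_nonneg)
  also have "\<dots> \<le> 2 * sqrt 2"
  proof -
    have "2 * sqrt 2 / sqrt (real n + 1) \<ge> 0" by simp
    with telescope[of n] show ?thesis by linarith
  qed
  finally show ?thesis .
qed

lemma sum_decay_convolution_le: "(\<Sum>a\<in>{1..<n}. decay a * decay (n - a)) \<le> 16 * decay n"
proof -
  have "(\<Sum>a\<in>{1..<n}. decay a * decay (n - a))
      \<le> (\<Sum>a\<in>{1..<n}. 2 * sqrt 2 * decay n * (decay a + decay (n - a)))"
  proof (rule sum_mono)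
    fix a assume a: "a \<in> {1..<n}"
    then have "decay a * decay (n - a) \<le> 2 * sqrt 2 * (decay a + decay (n - a)) * decay (a + (n - a))"
      by (intro decay_mult_le) auto
    with a show "decay a * decay (n - a) \<le> 2 * sqrt 2 * decay n * (decay a + decay (n - a))"
      by (simp add: algebra_simps)
  qed
  also have "\<dots> = 2 * sqrt 2 * decay n * ((\<Sum>a\<in>{1..<n}. decay a) + (\<Sum>a\<in>{1..<n}. decay (n - a)))"
    by (simp only: sum.distrib[symmetric] sum_distrib_left)
  also have "(\<Sum>a\<in>{1..<n}. decay (n - a)) = (\<Sum>a\<in>{1..<n}. decay a)"
    by (rule sum.reindex_bij_witness[of _ "\<lambda>a. n - a" "\<lambda>a. n - a"]) auto
  also have "2 * sqrt 2 * decay n * ((\<Sum>a\<in>{1..<n}. decay a) + (\<Sum>a\<in>{1..<n}. decay a))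
      \<le> 2 * sqrt 2 * decay n * (2 * sqrt 2 + 2 * sqrt 2)"
    by (intro mult_left_mono add_mono sum_decay_le) (auto simp: decay_nonneg)
  also have "\<dots> = 16 * decay n" by (simp add: algebra_simps)
  finally show ?thesis .
qed

definition block_weight :: "real \<Rightarrow> nat \<Rightarrow> real" where
  "block_weight c a = fact (a - 1) * c ^ a / sqrt (real a + 1)"

lemma block_weight_nonneg: "c \<ge> 0 \<Longrightarrow> block_weight c a \<ge> 0"
  by (simp add: block_weight_def)

lemma block_weight_pos: "c > 0 \<Longrightarrow> block_weight c a > 0"
  by (simp add: block_weight_def add_pos_nonneg)

lemma block_weight_eq_decay:
  assumes "a \<ge> 1"
  shows "block_weight c a = fact a * c ^ a * decay a"
proof -
  have "fact a = real a * fact (a - 1)" using assms by (simp add: fact_reduce)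
  moreover have "real a > 0" "sqrt (real a + 1) > 0" using assms by (auto simp: add_pos_nonneg)
  ultimately show ?thesis by (simp add: block_weight_def decay_def)
qed

lemma block_weight_convolution_le:
  assumes c: "c \<ge> 0"
  shows "(\<Sum>a\<in>{1..<n}. real (n choose a) * (block_weight c a * block_weight c (n - a)))
       \<le> 16 * block_weight c n"
proof (cases "n = 0")
  case True
  then show ?thesis by (simp add: block_weight_def)
next
  case False
  have binom: "real (n choose a) * (block_weight c a * block_weight c (n - a))
      = fact n * c ^ n * (decay a * decay (n - a))" if a: "a \<in> {1..<n}" for a
  proof -
    have "real (fact a * fact (n - a) * (n choose a)) = real (fact n)"
      using a by (subst binomial_fact_lemma) auto
    then have "real (n choose a) * fact a * fact (n - a) = fact n"
      by (simp only: of_nat_mult of_nat_fact mult_ac)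
    moreover have "c ^ a * c ^ (n - a) = c ^ n" using a by (simp add: power_add[symmetric])
    moreover have "block_weight c a = fact a * c ^ a * decay a"
      "block_weight c (n - a) = fact (n - a) * c ^ (n - a) * decay (n - a)"
      using a by (auto intro: block_weight_eq_decay)
    then have "real (n choose a) * (block_weight c a * block_weight c (n - a))
        = (real (n choose a) * fact a * fact (n - a)) * (c ^ a * c ^ (n - a)) * (decay a * decay (n - a))"
      by (simp only: mult_ac)
    ultimately show ?thesis by simp
  qed
  have "(\<Sum>a\<in>{1..<n}. real (n choose a) * (block_weight c a * block_weight c (n - a)))
      = fact n * c ^ n * (\<Sum>a\<in>{1..<n}. decay a * decay (n - a))"
    by (simp add: binom sum_distrib_left)
  also have "\<dots> \<le> fact n * c ^ n * (16 * decay n)"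
    using c by (intro mult_left_mono sum_decay_convolution_le) auto
  also have "\<dots> = 16 * block_weight c n"
    using False by (simp add: block_weight_eq_decay)
  finally show ?thesis .
qed

lemma sum_ordered_partitions_block_weight_le:
  assumes c: "c \<ge> 0"
  shows "finite S \<Longrightarrow> S \<noteq> {} \<Longrightarrow> r \<ge> 1 \<Longrightarrow>
    (\<Sum>xs\<in>ordered_partitions r S. \<Prod>A\<in>set xs. block_weight c (card A))
      \<le> 16 ^ (r - 1) * block_weight c (card S)"
proof (induction r arbitrary: S)
  case (Suc r)
  note S = Suc.prems(1) and S_ne = Suc.prems(2)
  show ?case
  proof (cases "r = 0")
    case True
    then show ?thesis using ordered_partitions_1[OF S_ne] by simp
  next
    case False
    let ?Q = "\<lambda>T. \<Sum>ys\<in>ordered_partitions r T. \<Prod>A\<in>set ys. block_weight c (card A)"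
    let ?U = "{B. B \<subseteq> S \<and> B \<noteq> {} \<and> B \<noteq> S}"
    define n where "n = card S"
    have "(\<Sum>xs\<in>ordered_partitions (Suc r) S. \<Prod>A\<in>set xs. block_weight c (card A))
        = (\<Sum>B | B \<subseteq> S \<and> B \<noteq> {}. block_weight c (card B) * ?Q (S - B))"
      by (rule sum_prod_ordered_partitions_Suc[OF S])
    also have "\<dots> = (\<Sum>B\<in>?U. block_weight c (card B) * ?Q (S - B))"
    proof -
      have "{B. B \<subseteq> S \<and> B \<noteq> {}} = insert S ?U" using S_ne by auto
      moreover have "finite ?U" by (rule finite_subset[of _ "Pow S"]) (auto simp: S)
      ultimately show ?thesis using False by (simp add: ordered_partitions_empty)
    qed
    also have "\<dots> \<le> (\<Sum>B\<in>?U. block_weight c (card B) * (16 ^ (r - 1) * block_weight c (n - card B)))"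
    proof (rule sum_mono)
      fix B assume B: "B \<in> ?U"
      then have "card (S - B) = n - card B"
        using S by (auto simp: n_def intro: card_Diff_subset finite_subset)
      moreover have "?Q (S - B) \<le> 16 ^ (r - 1) * block_weight c (card (S - B))"
        using B S False by (intro Suc.IH) auto
      ultimately show "block_weight c (card B) * ?Q (S - B)
          \<le> block_weight c (card B) * (16 ^ (r - 1) * block_weight c (n - card B))"
        by (simp add: mult_left_mono block_weight_nonneg c)
    qed
    also have "\<dots> = 16 ^ (r - 1) * (\<Sum>a\<in>{1..<n}. real (n choose a) * (block_weight c a * block_weight c (n - a)))"
      unfolding n_def sum_proper_subsets_card[OF S, symmetric] by (simp add: sum_distrib_left mult_ac)
    also have "\<dots> \<le> 16 ^ (r - 1) * (16 * block_weight c n)"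
      by (intro mult_left_mono block_weight_convolution_le c) simp
    also have "\<dots> = 16 ^ (Suc r - 1) * block_weight c (card S)"
      using False by (cases r) (simp_all add: n_def)
    finally show ?thesis .
  qed
qed simp

section \<open>Partition sums for constant data\<close>

definition const_marg :: "real \<Rightarrow> nat \<Rightarrow> real" where
  "const_marg \<theta> a =
     (1 / sqrt (2 * pi)) ^ a / sqrt (real a + 1) * exp (- (real a * \<theta>\<^sup>2) / (2 * (real a + 1)))"

lemma completing_square:
  fixes b \<theta> x :: real
  assumes "b \<ge> 0"
  shows "b * (- (\<theta> - x)\<^sup>2 / 2) + (- x\<^sup>2 / 2)
       = - (b * \<theta>\<^sup>2) / (2 * (b + 1)) + (- (b + 1) * (x - b * \<theta> / (b + 1))\<^sup>2 / 2)"
proof -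
  define Z where "Z = b + 1"
  have Z0: "Z > 0" using assms by (simp add: Z_def)
  have "x - b * \<theta> / Z = (Z * x - b * \<theta>) / Z" using Z0 by (simp add: field_simps)
  then have square: "- Z * (x - b * \<theta> / Z)\<^sup>2 / 2 = - ((Z * x - b * \<theta>)\<^sup>2) / (2 * Z)"
    using Z0 by (simp add: power_divide power2_eq_square field_simps)
  have numerator: "- (b * \<theta>\<^sup>2) - (Z * x - b * \<theta>)\<^sup>2 = Z * (- (b * (\<theta> - x)\<^sup>2) - x\<^sup>2)"
    by (simp add: Z_def power2_eq_square algebra_simps)
  have "- (b * \<theta>\<^sup>2) / (2 * Z) + - ((Z * x - b * \<theta>)\<^sup>2) / (2 * Z)
      = (- (b * \<theta>\<^sup>2) - (Z * x - b * \<theta>)\<^sup>2) / (2 * Z)"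
    by (simp add: add_divide_distrib diff_divide_distrib)
  also have "\<dots> = (- (b * (\<theta> - x)\<^sup>2) - x\<^sup>2) / 2"
    unfolding numerator using Z0 by simp
  also have "\<dots> = b * (- (\<theta> - x)\<^sup>2 / 2) + (- x\<^sup>2 / 2)" by (simp add: field_simps)
  finally show ?thesis using square unfolding Z_def[symmetric] by simp
qed

lemma kern_power_mult_q0:
  fixes \<theta> x :: real and a :: nat
  defines "\<mu> \<equiv> real a * \<theta> / (real a + 1)"
  defines "\<sigma> \<equiv> 1 / sqrt (real a + 1)"
  shows "kern \<theta> x ^ a * q0 x = const_marg \<theta> a * normal_density \<mu> \<sigma> x"
proof -
  define Z where "Z = real a + 1"
  have Z0: "Z > 0" by (simp add: Z_def)
  have sig2: "\<sigma>\<^sup>2 = 1 / Z" using Z0 by (simp add: \<sigma>_def Z_def power_divide)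
  have "kern \<theta> x = 1 / sqrt (2 * pi) * exp (- (\<theta> - x)\<^sup>2 / 2)"
    by (simp add: kern_def normal_density_def)
  moreover have "exp (- (\<theta> - x)\<^sup>2 / 2) ^ a = exp (real a * (- (\<theta> - x)\<^sup>2 / 2))"
    by (rule exp_of_nat_mult[symmetric])
  ultimately have kern_pow:
    "kern \<theta> x ^ a = (1 / sqrt (2 * pi)) ^ a * exp (real a * (- (\<theta> - x)\<^sup>2 / 2))"
    by (simp only: power_mult_distrib)
  have q: "q0 x = 1 / sqrt (2 * pi) * exp (- x\<^sup>2 / 2)"
    by (simp add: q0_def std_normal_density_def)
  have nd: "normal_density \<mu> \<sigma> x = sqrt Z / sqrt (2 * pi) * exp (- Z * (x - \<mu>)\<^sup>2 / 2)"
  proof -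
    have "sqrt (2 * pi * \<sigma>\<^sup>2) = sqrt (2 * pi) / sqrt Z"
      by (simp add: sig2 real_sqrt_divide)
    moreover have "- (x - \<mu>)\<^sup>2 / (2 * \<sigma>\<^sup>2) = - Z * (x - \<mu>)\<^sup>2 / 2"
      using Z0 by (simp add: sig2 field_simps)
    ultimately show ?thesis by (simp add: normal_density_def)
  qed
  have expo: "real a * (- (\<theta> - x)\<^sup>2 / 2) + (- x\<^sup>2 / 2)
      = - (real a * \<theta>\<^sup>2) / (2 * Z) + (- Z * (x - \<mu>)\<^sup>2 / 2)"
    unfolding Z_def \<mu>_def by (rule completing_square) simp
  have "kern \<theta> x ^ a * q0 x = (1 / sqrt (2 * pi)) ^ a * (1 / sqrt (2 * pi)) *
        exp (real a * (- (\<theta> - x)\<^sup>2 / 2) + (- x\<^sup>2 / 2))"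
    unfolding kern_pow q exp_add by (simp add: mult_ac)
  also have "\<dots> = (1 / sqrt (2 * pi)) ^ a * (1 / sqrt (2 * pi)) *
        exp (- (real a * \<theta>\<^sup>2) / (2 * Z)) * exp (- Z * (x - \<mu>)\<^sup>2 / 2)"
    unfolding expo exp_add by (simp add: mult_ac)
  also have "\<dots> = const_marg \<theta> a * normal_density \<mu> \<sigma> x"
    unfolding nd const_marg_def Z_def[symmetric] using Z0 by (simp add: field_simps)
  finally show ?thesis .
qed

lemma marg_const:
  assumes "finite A"
  shows "marg (\<lambda>i. \<theta>) A = const_marg \<theta> (card A)"
proof -
  define a where "a = card A"
  have "marg (\<lambda>i. \<theta>) A = (LINT x|lborel. kern \<theta> x ^ a * q0 x)"
    by (simp add: marg_def a_def)
  also have "\<dots> = (LINT x|lborel. const_marg \<theta> a * normal_density (real a * \<theta> / (real a + 1)) (1 / sqrt (real a + 1)) x)"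
    by (simp add: kern_power_mult_q0)
  also have "\<dots> = const_marg \<theta> a"
    by (simp add: integral_normal_density)
  finally show ?thesis by (simp add: a_def)
qed

lemma fact_mult_const_marg:
  "fact (a - 1) * const_marg \<theta> a
     = exp (- (real a * \<theta>\<^sup>2) / (2 * (real a + 1))) * block_weight (1 / sqrt (2 * pi)) a"
  by (simp add: const_marg_def block_weight_def)

lemma fact_mult_const_marg_le:
  assumes "a \<ge> 1"
  shows "fact (a - 1) * const_marg \<theta> a \<le> exp (- \<theta>\<^sup>2 / 4) * block_weight (1 / sqrt (2 * pi)) a"
proof -
  have "\<theta>\<^sup>2 / 4 \<le> real a * \<theta>\<^sup>2 / (2 * (real a + 1))"
    using assms mult_right_mono[of 1 "real a" "\<theta>\<^sup>2"] by (simp add: field_simps)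
  then show ?thesis
    unfolding fact_mult_const_marg by (intro mult_right_mono block_weight_nonneg) auto
qed

lemma fact_mult_const_marg_ge:
  "exp (- \<theta>\<^sup>2 / 2) * block_weight (1 / sqrt (2 * pi)) a \<le> fact (a - 1) * const_marg \<theta> a"
proof -
  have "real a * \<theta>\<^sup>2 / (2 * (real a + 1)) \<le> \<theta>\<^sup>2 / 2"
    by (simp add: field_simps)
  then show ?thesis
    unfolding fact_mult_const_marg by (intro mult_right_mono block_weight_nonneg) auto
qed

definition partition_sum :: "real \<Rightarrow> nat \<Rightarrow> nat \<Rightarrow> real" where
  "partition_sum \<theta> n s = (\<Sum>P\<in>tau s n. \<Prod>A\<in>P. fact (card A - 1) * marg (\<lambda>i. \<theta>) A)"

lemma finite_tau: "finite (tau s n)"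
  unfolding tau_def by (rule finite_subset[OF _ finitely_many_partition_on[of "{1..n}"]]) auto

lemma tau_block:
  assumes "P \<in> tau s n" "A \<in> P"
  shows "finite A" "card A \<ge> 1"
proof -
  have p: "partition_on {1..n} P" using assms by (simp add: tau_def)
  have "A \<subseteq> {1..n}" using partition_onD1[OF p] assms by auto
  then show fA: "finite A" by (rule finite_subset) simp
  moreover have "A \<noteq> {}" using partition_onD3[OF p] assms by auto
  ultimately show "card A \<ge> 1" by (simp add: Suc_leI card_gt_0_iff)
qed

lemma partition_sum_eq_const_marg:
  "partition_sum \<theta> n s = (\<Sum>P\<in>tau s n. \<Prod>A\<in>P. fact (card A - 1) * const_marg \<theta> (card A))"
  unfolding partition_sum_def
  by (intro sum.cong prod.cong refl) (simp add: marg_const tau_block)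

lemma partition_sum_nonneg: "partition_sum \<theta> n s \<ge> 0"
  unfolding partition_sum_eq_const_marg
  by (intro sum_nonneg prod_nonneg) (simp add: const_marg_def)

(* Every one of the s \<ge> 2 blocks carries a factor exp (- \<theta>^2 / 4). *)
lemma partition_sum_le:
  assumes n: "n \<ge> 1" and s: "s \<ge> 2"
  shows "partition_sum \<theta> n s
       \<le> exp (- \<theta>\<^sup>2 / 2) * block_weight (1 / sqrt (2 * pi)) n * (16 ^ (s - 1) / fact s)"
proof -
  define c :: real where "c = 1 / sqrt (2 * pi)"
  define q where "q = exp (- \<theta>\<^sup>2 / 4)"
  have "q ^ s \<le> q ^ 2" using s by (intro power_decreasing) (auto simp: q_def)
  also have "q ^ 2 = exp (- \<theta>\<^sup>2 / 2)" by (simp add: q_def power2_eq_square flip: exp_add)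
  finally have q_pow: "q ^ s \<le> exp (- \<theta>\<^sup>2 / 2)" .
  have "partition_sum \<theta> n s \<le> (\<Sum>P\<in>tau s n. \<Prod>A\<in>P. q * block_weight c (card A))"
    unfolding partition_sum_eq_const_marg
  proof (intro sum_mono prod_mono conjI)
    fix P A assume "P \<in> tau s n" "A \<in> P"
    then show "fact (card A - 1) * const_marg \<theta> (card A) \<le> q * block_weight c (card A)"
      unfolding q_def c_def by (intro fact_mult_const_marg_le tau_block)
  qed (simp add: const_marg_def)
  also have "\<dots> = q ^ s * (\<Sum>P\<in>tau s n. \<Prod>A\<in>P. block_weight c (card A))"
    by (simp add: prod.distrib sum_distrib_left tau_def)
  also have "\<dots> = q ^ s * ((\<Sum>xs\<in>ordered_partitions s {1..n}. \<Prod>A\<in>set xs. block_weight c (card A)) / fact s)"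
    by (simp add: sum_ordered_partitions tau_def)
  also have "\<dots> \<le> exp (- \<theta>\<^sup>2 / 2) * (16 ^ (s - 1) * block_weight c n / fact s)"
  proof (intro mult_mono divide_right_mono)
    show "(\<Sum>xs\<in>ordered_partitions s {1..n}. \<Prod>A\<in>set xs. block_weight c (card A))
        \<le> 16 ^ (s - 1) * block_weight c n"
      using sum_ordered_partitions_block_weight_le[of c "{1..n}" s] n s by (simp add: c_def)
  qed (use q_pow in \<open>auto intro!: divide_nonneg_nonneg sum_nonneg prod_nonneg block_weight_nonneg simp: c_def q_def\<close>)
  finally show ?thesis by (simp add: c_def mult_ac)
qed

lemma partition_sum_1_ge:
  assumes n: "n \<ge> 1"
  shows "exp (- \<theta>\<^sup>2 / 2) * block_weight (1 / sqrt (2 * pi)) n \<le> partition_sum \<theta> n 1"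
proof -
  have mem: "{{1..n}} \<in> tau 1 n" using n by (simp add: tau_def partition_on_space)
  have "exp (- \<theta>\<^sup>2 / 2) * block_weight (1 / sqrt (2 * pi)) n
      \<le> (\<Prod>A\<in>{{1..n}}. fact (card A - 1) * const_marg \<theta> (card A))"
    using fact_mult_const_marg_ge by simp
  also have "\<dots> \<le> partition_sum \<theta> n 1"
    unfolding partition_sum_eq_const_marg
    by (rule member_le_sum[OF mem _ finite_tau]) (auto intro!: prod_nonneg simp: const_marg_def)
  finally show ?thesis .
qed

lemma post_K_const_1_error_le:
  fixes \<pi> :: "real \<Rightarrow> real" and a :: "nat \<Rightarrow> real"
  assumes n: "n \<ge> 1"
    and a: "\<And>s. s \<ge> 1 \<Longrightarrow> (LINT \<alpha>:{0<..}|lborel. \<alpha> ^ s / pochhammer \<alpha> n * \<pi> \<alpha>) = a s"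
    and a1: "a 1 > 0" and a_nonneg: "\<And>s. s \<ge> 2 \<Longrightarrow> a s \<ge> 0"
  shows "\<bar>post_K \<pi> (\<lambda>i. \<theta>) n 1 - 1\<bar> \<le> (\<Sum>s=2..n. 16 ^ (s - 1) / fact s * a s) / a 1"
proof -
  define L where "L = exp (- \<theta>\<^sup>2 / 2) * block_weight (1 / sqrt (2 * pi)) n"
  define W1 where "W1 = a 1 * partition_sum \<theta> n 1"
  define N where "N = (\<Sum>s=2..n. a s * partition_sum \<theta> n s)"
  have W_eq: "W \<pi> (\<lambda>i. \<theta>) n s = a s * partition_sum \<theta> n s" if "s \<ge> 1" for s
    using a[OF that] by (simp add: W_def partition_sum_def)
  have L_pos: "L > 0" by (simp add: L_def block_weight_pos)
  have W1_ge: "a 1 * L \<le> W1"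
    unfolding W1_def L_def using partition_sum_1_ge[OF n] a1 by (simp add: mult_left_mono)
  have N_nonneg: "N \<ge> 0"
    unfolding N_def by (auto intro!: sum_nonneg mult_nonneg_nonneg a_nonneg partition_sum_nonneg)
  have N_le: "N \<le> L * (\<Sum>s=2..n. 16 ^ (s - 1) / fact s * a s)"
    unfolding N_def sum_distrib_left
  proof (rule sum_mono)
    fix s assume "s \<in> {2..n}"
    then show "a s * partition_sum \<theta> n s \<le> L * (16 ^ (s - 1) / fact s * a s)"
      using mult_left_mono[OF partition_sum_le[OF n, of s \<theta>] a_nonneg[of s]]
      by (simp add: L_def mult_ac)
  qed
  have "W1 > 0" using W1_ge a1 L_pos by (meson less_le_trans mult_pos_pos)
  have "(\<Sum>s=1..n. W \<pi> (\<lambda>i. \<theta>) n s) = (\<Sum>s=1..n. a s * partition_sum \<theta> n s)"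
    by (intro sum.cong refl W_eq) simp
  then have "post_K \<pi> (\<lambda>i. \<theta>) n 1 = W1 / (W1 + N)"
    using n W_eq[of 1] by (simp add: post_K_def W1_def N_def sum.atLeast_Suc_atMost numeral_2_eq_2)
  also have "\<bar>W1 / (W1 + N) - 1\<bar> = N / (W1 + N)"
    using \<open>W1 > 0\<close> N_nonneg by (simp add: field_simps)
  also have "\<dots> \<le> N / (a 1 * L)"
    using W1_ge N_nonneg a1 L_pos \<open>W1 > 0\<close> by (intro divide_left_mono) (auto intro!: mult_pos_pos)
  also have "\<dots> \<le> (\<Sum>s=2..n. 16 ^ (s - 1) / fact s * a s) / a 1"
    using N_le a1 L_pos by (simp add: divide_simps mult.commute)
  finally show ?thesis .
qed

lemma exp_partial_sum_le:
  fixes x :: real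
  assumes "x \<ge> 0"
  shows "(\<Sum>k<m. x ^ k / fact k) \<le> exp x"
proof -
  have s: "(\<lambda>k. x ^ k / fact k) sums exp x"
    using exp_converges[of x] by (simp add: divide_inverse_commute scaleR_conv_of_real)
  then have "(\<Sum>k<m. x ^ k / fact k) \<le> (\<Sum>k. x ^ k / fact k)"
    using assms by (intro sum_le_suminf) (auto simp: sums_iff)
  with s show ?thesis by (simp add: sums_iff)
qed

lemma pow_le_fact_mult_exp_moment:
  fixes x :: real
  assumes x: "x \<ge> 0"
  shows "x ^ k \<le> fact k * (1 + x * exp (16 * x))"
proof -
  have "x ^ k / fact k \<le> (\<Sum>j<Suc k. x ^ j / fact j)"
    by (rule member_le_sum) (use x in auto)
  also have "\<dots> \<le> exp x" by (rule exp_partial_sum_le[OF x])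
  also have "exp x \<le> 1 + x * exp x"
  proof -
    have "exp x * (1 - x) \<le> exp x * exp (- x)"
      using exp_ge_add_one_self[of "- x"] by (intro mult_left_mono) auto
    then show ?thesis by (simp add: exp_minus algebra_simps)
  qed
  also have "x * exp x \<le> x * exp (16 * x)" using x by (intro mult_left_mono) auto
  finally show ?thesis by (simp add: divide_simps mult.commute)
qed

lemma sum_moment_weights_le:
  fixes x :: real
  assumes x: "x \<ge> 0"
  shows "(\<Sum>r=2..n. 16 ^ (r - 1) / fact r * x ^ (r - 1)) \<le> 16 * x * exp (16 * x)"
proof -
  have "(\<Sum>r=2..n. 16 ^ (r - 1) / fact r * x ^ (r - 1))
      \<le> (\<Sum>r=2..n. 16 * x * ((16 * x) ^ (r - 2) / fact (r - 2)))"
  proof (rule sum_mono)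
    fix r assume r: "r \<in> {2..n}"
    then have "r - 1 = Suc (r - 2)" by auto
    then have "16 ^ (r - 1) / fact r * x ^ (r - 1) = 16 * x * ((16 * x) ^ (r - 2) / fact r)"
      by (simp add: power_mult_distrib)
    also have "\<dots> \<le> 16 * x * ((16 * x) ^ (r - 2) / fact (r - 2))"
      using x by (intro mult_left_mono divide_left_mono fact_mono) auto
    finally show "16 ^ (r - 1) / fact r * x ^ (r - 1) \<le> 16 * x * ((16 * x) ^ (r - 2) / fact (r - 2))" .
  qed
  also have "\<dots> = 16 * x * (\<Sum>k<n - 1. (16 * x) ^ k / fact k)"
    unfolding sum_distrib_left
    by (rule sum.reindex_bij_witness[of _ "\<lambda>k. k + 2" "\<lambda>r. r - 2"]) auto
  also have "\<dots> \<le> 16 * x * exp (16 * x)"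
    using x by (intro mult_left_mono exp_partial_sum_le) auto
  finally show ?thesis .
qed

lemma summable_gamma_moment_series:
  fixes D \<nu> \<rho> :: real
  assumes \<rho>: "\<rho> > 16" and \<nu>: "\<nu> > 0" and D: "D > 0"
  shows "summable (\<lambda>k. 16 ^ k / fact k * (D * \<rho> powr (- real (Suc k)) * Gamma (\<nu> + real (Suc k) + 1)))"
proof -
  define f where "f k = 16 ^ k / fact k * (D * \<rho> powr (- real (Suc k)) * Gamma (\<nu> + real (Suc k) + 1))" for k
  have f_pos: "f k > 0" for k using \<rho> \<nu> D by (simp add: f_def)
  have f_Suc: "f (Suc k) = f k * (16 * (\<nu> + real k + 2) / ((real k + 1) * \<rho>))" for k
  proof -
    have "\<nu> + real (Suc k) + 1 \<notin> \<int>\<^sub>\<le>\<^sub>0" using \<nu>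
      by (metis add_pos_nonneg less_add_one nonpos_Ints_nonpos not_le of_nat_0_le_iff order_less_trans)
    then have "Gamma (\<nu> + real (Suc k) + 1 + 1) = (\<nu> + real (Suc k) + 1) * Gamma (\<nu> + real (Suc k) + 1)"
      by (rule Gamma_plus1)
    then have Gamma_Suc: "Gamma (\<nu> + real (Suc (Suc k)) + 1) = (\<nu> + real k + 2) * Gamma (\<nu> + real (Suc k) + 1)"
      by (simp add: add_ac)
    have "- real (Suc (Suc k)) = - real (Suc k) + (- 1)" by simp
    then have "\<rho> powr (- real (Suc (Suc k))) = \<rho> powr (- real (Suc k)) * \<rho> powr (- 1)"
      by (simp only: powr_add)
    then have powr_Suc: "\<rho> powr (- real (Suc (Suc k))) = \<rho> powr (- real (Suc k)) / \<rho>"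
      using \<rho> by (simp add: powr_minus divide_inverse)
    show ?thesis unfolding f_def Gamma_Suc powr_Suc using \<rho> by (simp add: field_simps)
  qed
  (* the ratio f (Suc k) / f k tends to 16 / \<rho> < 1 *)
  define q where "q = (1 + 16 / \<rho>) / 2"
  define N where "N = nat \<lceil>(16 * \<nu> + 32) / ((\<rho> - 16) / 2)\<rceil>"
  have "q < 1" using \<rho> by (simp add: q_def field_simps)
  then have "summable f"
  proof (rule summable_ratio_test[of _ N])
    fix k assume "k \<ge> N"
    then have "real k \<ge> (16 * \<nu> + 32) / ((\<rho> - 16) / 2)"
      unfolding N_def by linarith
    then have "16 * \<nu> + 32 \<le> (\<rho> - 16) / 2 * real k"
      using \<rho> by (simp add: field_simps)
    then have "64 + 32 * \<nu> + 16 * real k \<le> \<rho> * real k"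
      by (simp add: field_simps)
    then have "16 * (\<nu> + real k + 2) \<le> (\<rho> * real k + \<rho> + 16 * real k + 16) / 2"
      using \<rho> by (simp add: algebra_simps)
    also have "\<dots> = q * ((real k + 1) * \<rho>)"
      using \<rho> by (simp add: q_def field_simps)
    finally have "16 * (\<nu> + real k + 2) / ((real k + 1) * \<rho>) \<le> q"
      using \<rho> by (simp add: divide_simps)
    then have "f k * (16 * (\<nu> + real k + 2) / ((real k + 1) * \<rho>)) \<le> f k * q"
      using f_pos[of k] by (intro mult_left_mono) auto
    then have "norm (f (Suc k)) \<le> f k * q"
      using f_pos[of "Suc k"] by (simp only: f_Suc real_norm_def abs_of_pos)
    then show "norm (f (Suc k)) \<le> q * norm (f k)"
      using f_pos[of k] by (simp add: mult.commute)
  qed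
  then show ?thesis by (simp only: f_def[abs_def])
qed

lemma ennreal_mult_exp_eq_suminf:
  fixes x y :: real
  assumes x: "x \<ge> 0" and y: "y \<ge> 0"
  shows "ennreal (y * (x * exp (16 * x))) = (\<Sum>k. ennreal (16 ^ k / fact k) * ennreal (x ^ Suc k * y))"
proof -
  have "(\<lambda>k. (y * x) * ((16 * x) ^ k / fact k)) sums ((y * x) * exp (16 * x))"
    using exp_converges[of "16 * x"]
    by (intro sums_mult) (simp add: divide_inverse_commute scaleR_conv_of_real)
  moreover have "(y * x) * ((16 * x) ^ k / fact k) = 16 ^ k / fact k * (x ^ Suc k * y)" for k
    by (simp add: power_mult_distrib)
  ultimately have s: "(\<lambda>k. 16 ^ k / fact k * (x ^ Suc k * y)) sums (y * (x * exp (16 * x)))"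
    by (simp add: mult_ac)
  have "ennreal (y * (x * exp (16 * x))) = ennreal (\<Sum>k. 16 ^ k / fact k * (x ^ Suc k * y))"
    using s by (simp add: sums_iff)
  also have "\<dots> = (\<Sum>k. ennreal (16 ^ k / fact k * (x ^ Suc k * y)))"
    using s x y by (intro suminf_ennreal2[symmetric]) (auto simp: sums_iff)
  also have "\<dots> = (\<Sum>k. ennreal (16 ^ k / fact k) * ennreal (x ^ Suc k * y))"
    using x y by (intro suminf_cong ennreal_mult) auto
  finally show ?thesis .
qed

lemma integrable_exp_moment_of_gamma_moments:
  fixes \<pi> :: "real \<Rightarrow> real" and D \<nu> \<rho> :: real
  assumes [measurable]: "\<pi> \<in> borel_measurable borel"
    and nonneg: "\<And>\<alpha>. \<alpha> > 0 \<Longrightarrow> \<pi> \<alpha> \<ge> 0"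
    and D: "D > 0" and \<nu>: "\<nu> > 0" and \<rho>: "\<rho> > 16"
    and moments: "\<And>s::nat. s \<ge> 1 \<Longrightarrow>
      (\<integral>\<^sup>+ \<alpha>. ennreal (\<alpha> ^ s * \<pi> \<alpha>) * indicator {0<..} \<alpha> \<partial>lborel)
        < ennreal (D * \<rho> powr (- real s) * Gamma (\<nu> + real s + 1))"
  shows "integrable lborel (\<lambda>\<alpha>. indicator {0<..} \<alpha> * \<pi> \<alpha> * (\<alpha> * exp (16 * \<alpha>)))"
proof (rule integrableI_nonneg)
  show "AE \<alpha> in lborel. 0 \<le> indicator {0<..} \<alpha> * \<pi> \<alpha> * (\<alpha> * exp (16 * \<alpha>))"
    by (intro AE_I2) (auto split: split_indicator intro!: mult_nonneg_nonneg nonneg)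
  define c where "c k = (16::real) ^ k / fact k" for k
  define b where "b k = D * \<rho> powr (- real (Suc k)) * Gamma (\<nu> + real (Suc k) + 1)" for k
  have c_nonneg: "c k \<ge> 0" for k by (simp add: c_def)
  have b_nonneg: "b k \<ge> 0" for k
    unfolding b_def using D \<nu> by (intro mult_nonneg_nonneg less_imp_le[OF Gamma_real_pos]) auto
  (* expand exp (16 \<alpha>) into its power series and integrate termwise *)
  have expand: "ennreal (indicator {0<..} \<alpha> * \<pi> \<alpha> * (\<alpha> * exp (16 * \<alpha>)))
      = (\<Sum>k. ennreal (c k) * (ennreal (\<alpha> ^ Suc k * \<pi> \<alpha>) * indicator {0<..} \<alpha>))" for \<alpha>
    using ennreal_mult_exp_eq_suminf[of \<alpha> "\<pi> \<alpha>"] nonneg[of \<alpha>]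
    by (cases "\<alpha> > 0") (simp_all add: c_def)
  have "(\<integral>\<^sup>+ \<alpha>. ennreal (indicator {0<..} \<alpha> * \<pi> \<alpha> * (\<alpha> * exp (16 * \<alpha>))) \<partial>lborel)
      = (\<Sum>k. \<integral>\<^sup>+ \<alpha>. ennreal (c k) * (ennreal (\<alpha> ^ Suc k * \<pi> \<alpha>) * indicator {0<..} \<alpha>) \<partial>lborel)"
    unfolding expand by (rule nn_integral_suminf) simp
  also have "\<dots> = (\<Sum>k. ennreal (c k) * \<integral>\<^sup>+ \<alpha>. ennreal (\<alpha> ^ Suc k * \<pi> \<alpha>) * indicator {0<..} \<alpha> \<partial>lborel)"
    by (intro suminf_cong nn_integral_cmult) simp
  also have "\<dots> \<le> (\<Sum>k. ennreal (c k) * ennreal (b k))"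
  proof (intro suminf_le summableI mult_left_mono)
    show "(\<integral>\<^sup>+ \<alpha>. ennreal (\<alpha> ^ Suc k * \<pi> \<alpha>) * indicator {0<..} \<alpha> \<partial>lborel) \<le> ennreal (b k)" for k
      using moments[of "Suc k"] unfolding b_def by (auto intro: less_imp_le)
  qed simp
  also have "\<dots> = (\<Sum>k. ennreal (c k * b k))"
    using c_nonneg b_nonneg by (intro suminf_cong) (simp add: ennreal_mult)
  also have "\<dots> = ennreal (\<Sum>k. c k * b k)"
  proof (rule suminf_ennreal2)
    show "summable (\<lambda>k. c k * b k)"
      using summable_gamma_moment_series[OF \<rho> \<nu> D] by (simp add: c_def b_def)
  qed (use c_nonneg b_nonneg in simp)
  also have "\<dots> < \<infinity>" by simp
  finally show "(\<integral>\<^sup>+ \<alpha>. ennreal (indicator {0<..} \<alpha> * \<pi> \<alpha> * (\<alpha> * exp (16 * \<alpha>))) \<partial>lborel) < \<infinity>" .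
qed simp

lemma integrable_prior_density:
  fixes \<pi> :: "real \<Rightarrow> real"
  assumes [measurable]: "\<pi> \<in> borel_measurable borel"
    and nonneg: "\<And>\<alpha>. \<alpha> > 0 \<Longrightarrow> \<pi> \<alpha> \<ge> 0"
    and finite: "(\<integral>\<^sup>+ \<alpha>. ennreal (\<pi> \<alpha>) * indicator {0<..} \<alpha> \<partial>lborel) < \<infinity>"
  shows "integrable lborel (\<lambda>\<alpha>. indicator {0<..} \<alpha> * \<pi> \<alpha>)"
proof (rule integrableI_nonneg)
  show "AE \<alpha> in lborel. 0 \<le> indicator {0<..} \<alpha> * \<pi> \<alpha>"
    by (intro AE_I2) (auto split: split_indicator intro: nonneg)
  have "(\<integral>\<^sup>+ \<alpha>. ennreal (indicator {0<..} \<alpha> * \<pi> \<alpha>) \<partial>lborel)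
      = (\<integral>\<^sup>+ \<alpha>. ennreal (\<pi> \<alpha>) * indicator {0<..} \<alpha> \<partial>lborel)"
    by (intro nn_integral_cong) (auto split: split_indicator)
  with finite show "(\<integral>\<^sup>+ \<alpha>. ennreal (indicator {0<..} \<alpha> * \<pi> \<alpha>) \<partial>lborel) < \<infinity>"
    by simp
qed simp

lemma integral_indicator_pos:
  fixes f :: "real \<Rightarrow> real"
  assumes int: "integrable lborel (\<lambda>x. indicator {0<..<r} x * f x)"
    and r: "r > 0" and pos: "\<And>x. 0 < x \<Longrightarrow> x < r \<Longrightarrow> f x > 0"
  shows "(LINT x|lborel. indicator {0<..<r} x * f x) > 0"
proof -
  have nonneg: "AE x in lborel. 0 \<le> indicator {0<..<r} x * f x"
    using pos by (intro AE_I2) (auto split: split_indicator intro: less_imp_le)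
  have "(LINT x|lborel. indicator {0<..<r} x * f x) \<noteq> 0"
  proof
    assume "(LINT x|lborel. indicator {0<..<r} x * f x) = 0"
    then have "AE x in lborel. indicator {0<..<r} x * f x = 0"
      using integral_nonneg_eq_0_iff_AE[OF int nonneg] by simp
    then have "AE x in lborel. x \<notin> {0<..<r}"
      by eventually_elim (auto split: split_indicator dest: pos)
    then have "emeasure lborel {0<..<r} = 0"
      by (subst (asm) AE_iff_measurable[of "{0<..<r}"]) auto
    then show False using r by simp
  qed
  with integral_nonneg_AE[OF nonneg] show ?thesis by simp
qed

lemma borel_measurable_pochhammer [measurable]:
  fixes f :: "'a \<Rightarrow> real"
  assumes [measurable]: "f \<in> borel_measurable M"
  shows "(\<lambda>x. pochhammer (f x) k) \<in> borel_measurable M"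
  unfolding pochhammer_prod by measurable

lemma pochhammer_mono:
  fixes x y :: real
  assumes "0 < x" "x \<le> y"
  shows "pochhammer x m \<le> pochhammer y m"
proof (induction m)
  case (Suc m)
  then show ?case
    using assms by (simp add: pochhammer_rec' mult_mono pochhammer_nonneg)
qed simp

lemma pochhammer_ge_1:
  fixes x :: real
  assumes "0 \<le> x"
  shows "pochhammer (x + 1) m \<ge> 1"
proof -
  have "1 \<le> (fact m :: real)" by simp
  also have "fact m = pochhammer (1::real) m" by (rule pochhammer_fact)
  also have "\<dots> \<le> pochhammer (x + 1) m" using assms by (intro pochhammer_mono) auto
  finally show ?thesis .
qed

lemma pochhammer_ratio_le:
  fixes \<eta> :: real
  assumes "0 < \<eta>" "\<eta> \<le> 1"
  shows "pochhammer (\<eta> / 2 + 1) m / pochhammer (\<eta> + 1) m \<le> exp (- (\<eta> / 4) * harm m)"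
proof (induction m)
  case (Suc m)
  have factor: "(\<eta> / 2 + 1 + real m) / (\<eta> + 1 + real m) \<le> exp (- (\<eta> / 4) * inverse (real (Suc m)))"
  proof -
    have "(\<eta> / 4) * inverse (real (Suc m)) = (\<eta> / 2) / (2 * (real m + 1))"
      by (simp add: inverse_eq_divide add.commute)
    also have "\<dots> \<le> (\<eta> / 2) / (\<eta> + 1 + real m)"
      using assms by (intro divide_left_mono) auto
    finally have "(\<eta> / 2 + 1 + real m) / (\<eta> + 1 + real m) \<le> 1 + - (\<eta> / 4) * inverse (real (Suc m))"
      using assms by (simp add: field_simps)
    also have "\<dots> \<le> exp (- (\<eta> / 4) * inverse (real (Suc m)))"
      by (rule exp_ge_add_one_self)
    finally show ?thesis .
  qed
  have "pochhammer (\<eta> / 2 + 1) (Suc m) / pochhammer (\<eta> + 1) (Suc m)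
      = (pochhammer (\<eta> / 2 + 1) m / pochhammer (\<eta> + 1) m) * ((\<eta> / 2 + 1 + real m) / (\<eta> + 1 + real m))"
    by (simp only: pochhammer_rec' times_divide_times_eq mult.commute)
  also have "\<dots> \<le> exp (- (\<eta> / 4) * harm m) * exp (- (\<eta> / 4) * inverse (real (Suc m)))"
    by (intro mult_mono Suc.IH factor) (use assms in \<open>auto intro!: divide_nonneg_nonneg pochhammer_nonneg\<close>)
  also have "\<dots> = exp (- (\<eta> / 4) * harm (Suc m))"
    by (simp add: harm_Suc algebra_simps flip: exp_add)
  finally show ?case .
qed (simp add: harm_def)

lemma tendsto_exp_neg_harm:
  fixes \<eta> :: real
  assumes "0 < \<eta>"
  shows "(\<lambda>m. exp (- (\<eta> / 4) * harm m)) \<longlonglongrightarrow> 0"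
proof -
  have "filterlim (\<lambda>m. (\<eta> / 4) * harm m) at_top sequentially"
    using assms by (intro filterlim_tendsto_pos_mult_at_top[OF tendsto_const] harm_at_top) auto
  then have "filterlim (\<lambda>m. - ((\<eta> / 4) * harm m)) at_bot sequentially"
    by (simp add: filterlim_uminus_at_top)
  then show ?thesis
    by (simp add: filterlim_compose[OF exp_at_bot])
qed

section \<open>Priors on the concentration parameter\<close>

locale concentration_prior =
  fixes \<pi> :: "real \<Rightarrow> real" and \<epsilon> :: real
  assumes measurable_prior [measurable]: "\<pi> \<in> borel_measurable borel"
    and prior_nonneg: "\<And>\<alpha>. \<alpha> > 0 \<Longrightarrow> \<pi> \<alpha> \<ge> 0"
    and integrable_prior: "integrable lborel (\<lambda>\<alpha>. indicator {0<..} \<alpha> * \<pi> \<alpha>)"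
    and integrable_exp_moment:
      "integrable lborel (\<lambda>\<alpha>. indicator {0<..} \<alpha> * \<pi> \<alpha> * (\<alpha> * exp (16 * \<alpha>)))"
    and \<epsilon>_pos: "\<epsilon> > 0"
    and prior_pos: "\<And>\<alpha>. 0 < \<alpha> \<Longrightarrow> \<alpha> < \<epsilon> \<Longrightarrow> \<pi> \<alpha> > 0"
begin

(* pochhammer \<alpha> n = \<alpha> * pochhammer (\<alpha> + 1) (n - 1) turns the prior factor of W_s into a
   moment of post_weight n. *)
definition post_weight :: "nat \<Rightarrow> real \<Rightarrow> real" where
  "post_weight n \<alpha> = indicator {0<..} \<alpha> * \<pi> \<alpha> / pochhammer (\<alpha> + 1) (n - 1)"

definition moment :: "nat \<Rightarrow> nat \<Rightarrow> real" where
  "moment n k = (LINT \<alpha>|lborel. post_weight n \<alpha> * \<alpha> ^ k)"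

definition tail_moment :: "nat \<Rightarrow> real" where
  "tail_moment n = (\<Sum>r=2..n. 16 ^ (r - 1) / fact r * moment n (r - 1))"

definition mass_below :: "real \<Rightarrow> real" where
  "mass_below \<eta> = (LINT \<alpha>|lborel. indicator {0<..<\<eta>} \<alpha> * \<pi> \<alpha>)"

definition exp_moment :: real where
  "exp_moment = (LINT \<alpha>|lborel. indicator {0<..} \<alpha> * \<pi> \<alpha> * (\<alpha> * exp (16 * \<alpha>)))"

lemma post_weight_nonneg: "post_weight n \<alpha> \<ge> 0"
  by (cases "\<alpha> > 0") (auto simp: post_weight_def intro!: divide_nonneg_nonneg prior_nonneg pochhammer_nonneg)

lemma post_weight_le_prior: "post_weight n \<alpha> \<le> indicator {0<..} \<alpha> * \<pi> \<alpha>"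
proof (cases "\<alpha> > 0")
  case True
  then show ?thesis
    using pochhammer_ge_1[of \<alpha> "n - 1"] prior_nonneg[OF True]
    by (simp add: post_weight_def divide_le_eq mult_le_cancel_left1)
qed (simp add: post_weight_def)

lemma post_weight_le_pochhammer:
  assumes "0 < \<eta>" "\<eta> \<le> \<alpha>"
  shows "post_weight n \<alpha> \<le> \<pi> \<alpha> / pochhammer (\<eta> + 1) (n - 1)"
proof -
  have "pochhammer (\<eta> + 1) (n - 1) \<le> pochhammer (\<alpha> + 1) (n - 1)" "pochhammer (\<eta> + 1) (n - 1) > 0"
    using assms by (auto intro: pochhammer_mono pochhammer_pos)
  then show ?thesis
    using assms prior_nonneg[of \<alpha>] by (simp add: post_weight_def divide_left_mono)
qed

lemma post_weight_ge_pochhammer: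
  assumes "0 < \<alpha>" "\<alpha> \<le> \<eta>"
  shows "\<pi> \<alpha> / pochhammer (\<eta> + 1) (n - 1) \<le> post_weight n \<alpha>"
proof -
  have "pochhammer (\<alpha> + 1) (n - 1) \<le> pochhammer (\<eta> + 1) (n - 1)" "pochhammer (\<alpha> + 1) (n - 1) > 0"
    using assms by (auto intro: pochhammer_mono pochhammer_pos)
  then show ?thesis
    using assms prior_nonneg[of \<alpha>] by (simp add: post_weight_def divide_left_mono)
qed

lemma measurable_post_weight [measurable]: "post_weight n \<in> borel_measurable borel"
  unfolding post_weight_def[abs_def] by measurable

lemma integrable_post_weight_moment: "integrable lborel (\<lambda>\<alpha>. post_weight n \<alpha> * \<alpha> ^ k)"
proof (rule Bochner_Integration.integrable_bound)
  show "integrable lborel (\<lambda>\<alpha>. fact k * (indicator {0<..} \<alpha> * \<pi> \<alpha>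
      + indicator {0<..} \<alpha> * \<pi> \<alpha> * (\<alpha> * exp (16 * \<alpha>))))"
    using integrable_prior integrable_exp_moment by auto
  show "AE \<alpha> in lborel. norm (post_weight n \<alpha> * \<alpha> ^ k)
      \<le> norm (fact k * (indicator {0<..} \<alpha> * \<pi> \<alpha> + indicator {0<..} \<alpha> * \<pi> \<alpha> * (\<alpha> * exp (16 * \<alpha>))))"
  proof (rule AE_I2)
    fix \<alpha> :: real
    show "norm (post_weight n \<alpha> * \<alpha> ^ k)
      \<le> norm (fact k * (indicator {0<..} \<alpha> * \<pi> \<alpha> + indicator {0<..} \<alpha> * \<pi> \<alpha> * (\<alpha> * exp (16 * \<alpha>))))"
    proof (cases "\<alpha> > 0")
      case True
      have "post_weight n \<alpha> * \<alpha> ^ k \<le> \<pi> \<alpha> * (fact k * (1 + \<alpha> * exp (16 * \<alpha>)))"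
        using True post_weight_le_prior[of n \<alpha>] post_weight_nonneg[of n \<alpha>] prior_nonneg[OF True]
        by (intro mult_mono pow_le_fact_mult_exp_moment) auto
      moreover have "0 \<le> post_weight n \<alpha> * \<alpha> ^ k"
        using True post_weight_nonneg[of n \<alpha>] by simp
      ultimately show ?thesis
        using True prior_nonneg[OF True] by (simp add: algebra_simps)
    qed (simp add: post_weight_def)
  qed
qed simp

lemma moment_nonneg: "moment n k \<ge> 0"
proof -
  have "post_weight n \<alpha> * \<alpha> ^ k \<ge> 0" for \<alpha>
  proof (cases "\<alpha> > 0")
    case True
    then show ?thesis using post_weight_nonneg[of n \<alpha>] by simp
  qed (simp add: post_weight_def)
  then show ?thesis
    unfolding moment_def by (intro integral_nonneg_AE AE_I2)
qed

lemma prior_factor_eq_moment: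
  assumes "n \<ge> 1" "s \<ge> 1"
  shows "(LINT \<alpha>:{0<..}|lborel. \<alpha> ^ s / pochhammer \<alpha> n * \<pi> \<alpha>) = moment n (s - 1)"
  unfolding moment_def set_lebesgue_integral_def
proof (rule Bochner_Integration.integral_cong[OF refl])
  fix \<alpha> :: real
  show "indicator {0<..} \<alpha> *\<^sub>R (\<alpha> ^ s / pochhammer \<alpha> n * \<pi> \<alpha>) = post_weight n \<alpha> * \<alpha> ^ (s - 1)"
  proof (cases "\<alpha> > 0")
    case True
    have "pochhammer \<alpha> n = \<alpha> * pochhammer (\<alpha> + 1) (n - 1)"
      using assms(1) pochhammer_rec[of \<alpha> "n - 1"] by simp
    moreover have "\<alpha> ^ s = \<alpha> * \<alpha> ^ (s - 1)" using assms(2) by (cases s) auto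
    moreover have "pochhammer (\<alpha> + 1) (n - 1) > 0" using True by (intro pochhammer_pos) auto
    ultimately show ?thesis using True by (simp add: post_weight_def)
  qed (simp add: post_weight_def)
qed

lemma integrable_prior_below: "integrable lborel (\<lambda>\<alpha>. indicator {0<..<\<eta>} \<alpha> * \<pi> \<alpha>)"
proof -
  have "integrable lborel (\<lambda>\<alpha>. indicator {0<..<\<eta>} \<alpha> *\<^sub>R (indicator {0<..} \<alpha> * \<pi> \<alpha>))"
    by (intro integrable_mult_indicator integrable_prior) auto
  moreover have "(\<lambda>\<alpha>. indicator {0<..<\<eta>} \<alpha> *\<^sub>R (indicator {0<..} \<alpha> * \<pi> \<alpha>))
      = (\<lambda>\<alpha>. indicator {0<..<\<eta>} \<alpha> * \<pi> \<alpha>)"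
    by (auto split: split_indicator)
  ultimately show ?thesis by simp
qed

lemma mass_below_pos:
  assumes "0 < \<eta>" "\<eta> \<le> \<epsilon>"
  shows "mass_below \<eta> > 0"
  unfolding mass_below_def
  using assms by (intro integral_indicator_pos integrable_prior_below prior_pos) auto

lemma moment_0_ge:
  assumes \<eta>: "0 < \<eta>"
  shows "mass_below \<eta> / pochhammer (\<eta> + 1) (n - 1) \<le> moment n 0"
proof -
  have "mass_below \<eta> / pochhammer (\<eta> + 1) (n - 1)
      = (LINT \<alpha>|lborel. indicator {0<..<\<eta>} \<alpha> * \<pi> \<alpha> / pochhammer (\<eta> + 1) (n - 1))"
    by (simp add: mass_below_def)
  also have "\<dots> \<le> moment n 0"
    unfolding moment_def
  proof (rule Bochner_Integration.integral_mono)
    show "integrable lborel (\<lambda>\<alpha>. indicator {0<..<\<eta>} \<alpha> * \<pi> \<alpha> / pochhammer (\<eta> + 1) (n - 1))"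
      by (intro Bochner_Integration.integrable_divide_zero integrable_prior_below)
    show "integrable lborel (\<lambda>\<alpha>. post_weight n \<alpha> * \<alpha> ^ 0)"
      by (rule integrable_post_weight_moment)
    show "indicator {0<..<\<eta>} \<alpha> * \<pi> \<alpha> / pochhammer (\<eta> + 1) (n - 1) \<le> post_weight n \<alpha> * \<alpha> ^ 0"
      for \<alpha> :: real
      using post_weight_ge_pochhammer[of \<alpha> \<eta> n] post_weight_nonneg[of n \<alpha>]
      by (auto split: split_indicator)
  qed
  finally show ?thesis .
qed

lemma moment_0_pos: "moment n 0 > 0"
proof -
  have "pochhammer (\<epsilon> + 1) (n - 1) > 0" using \<epsilon>_pos by (intro pochhammer_pos) auto
  then have "mass_below \<epsilon> / pochhammer (\<epsilon> + 1) (n - 1) > 0"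
    using mass_below_pos[OF \<epsilon>_pos] by simp
  then show ?thesis using moment_0_ge[OF \<epsilon>_pos, of n] by linarith
qed

lemma tail_moment_eq_integral:
  "tail_moment n = (LINT \<alpha>|lborel. post_weight n \<alpha> * (\<Sum>r=2..n. 16 ^ (r - 1) / fact r * \<alpha> ^ (r - 1)))"
proof -
  have "tail_moment n = (\<Sum>r=2..n. LINT \<alpha>|lborel. 16 ^ (r - 1) / fact r * (post_weight n \<alpha> * \<alpha> ^ (r - 1)))"
    by (simp add: tail_moment_def moment_def)
  also have "\<dots> = (LINT \<alpha>|lborel. (\<Sum>r=2..n. 16 ^ (r - 1) / fact r * (post_weight n \<alpha> * \<alpha> ^ (r - 1))))"
    by (rule Bochner_Integration.integral_sum[symmetric])
       (intro Bochner_Integration.integrable_mult_right integrable_post_weight_moment)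
  also have "\<dots> = (LINT \<alpha>|lborel. post_weight n \<alpha> * (\<Sum>r=2..n. 16 ^ (r - 1) / fact r * \<alpha> ^ (r - 1)))"
    by (simp add: sum_distrib_left mult_ac)
  finally show ?thesis .
qed

(* Below \<eta> the moment weights are small; above \<eta> the posterior weight carries the
   factor 1 / pochhammer (\<eta> + 1) (n - 1). *)
lemma post_weight_mult_moment_weights_le:
  assumes \<eta>: "0 < \<eta>"
  shows "post_weight n \<alpha> * (\<Sum>r=2..n. 16 ^ (r - 1) / fact r * \<alpha> ^ (r - 1))
       \<le> 16 * \<eta> * exp (16 * \<eta>) * post_weight n \<alpha>
         + 16 * (indicator {0<..} \<alpha> * \<pi> \<alpha> * (\<alpha> * exp (16 * \<alpha>))) / pochhammer (\<eta> + 1) (n - 1)"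
    (is "post_weight n \<alpha> * ?F \<le> _ + 16 * ?M / ?p")
proof (cases "\<alpha> > 0")
  case True
  have F: "0 \<le> ?F" "?F \<le> 16 * \<alpha> * exp (16 * \<alpha>)"
    using True sum_moment_weights_le[of \<alpha> n] by (auto intro!: sum_nonneg)
  have "?p > 0" using \<eta> by (simp add: pochhammer_pos add_pos_pos)
  moreover have "?M \<ge> 0" using True prior_nonneg[OF True] by simp
  ultimately have M: "16 * ?M / ?p \<ge> 0" by simp
  show ?thesis
  proof (cases "\<alpha> \<le> \<eta>")
    case True
    have "?F \<le> 16 * \<eta> * exp (16 * \<eta>)"
      using F \<open>0 < \<alpha>\<close> True by (smt (verit) exp_le_cancel_iff mult_mono exp_ge_zero)
    then have "post_weight n \<alpha> * ?F \<le> post_weight n \<alpha> * (16 * \<eta> * exp (16 * \<eta>))"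
      using post_weight_nonneg by (rule mult_left_mono)
    with M show ?thesis by (simp add: mult_ac)
  next
    case False
    have "post_weight n \<alpha> * ?F \<le> \<pi> \<alpha> / ?p * (16 * \<alpha> * exp (16 * \<alpha>))"
      using F False \<eta> post_weight_le_pochhammer[of \<eta> \<alpha> n] post_weight_nonneg[of n \<alpha>]
      by (intro mult_mono) auto
    also have "\<dots> = 16 * ?M / ?p" using \<open>0 < \<alpha>\<close> by simp
    finally show ?thesis
      using post_weight_nonneg[of n \<alpha>] \<eta> by (smt (verit) mult_nonneg_nonneg exp_ge_zero)
  qed
qed (simp add: post_weight_def)

lemma tail_moment_le:
  assumes \<eta>: "0 < \<eta>"
  shows "tail_moment n
       \<le> 16 * \<eta> * exp (16 * \<eta>) * moment n 0 + 16 * exp_moment / pochhammer (\<eta> + 1) (n - 1)"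
proof -
  define M where "M \<alpha> = indicator {0<..} \<alpha> * \<pi> \<alpha> * (\<alpha> * exp (16 * \<alpha>))" for \<alpha> :: real
  define p where "p = pochhammer (\<eta> + 1) (n - 1)"
  have "tail_moment n = (LINT \<alpha>|lborel. post_weight n \<alpha> * (\<Sum>r=2..n. 16 ^ (r - 1) / fact r * \<alpha> ^ (r - 1)))"
    by (rule tail_moment_eq_integral)
  also have "\<dots> \<le> (LINT \<alpha>|lborel. 16 * \<eta> * exp (16 * \<eta>) * (post_weight n \<alpha> * \<alpha> ^ 0) + 16 * M \<alpha> / p)"
  proof (rule Bochner_Integration.integral_mono)
    show "integrable lborel (\<lambda>\<alpha>. post_weight n \<alpha> * (\<Sum>r=2..n. 16 ^ (r - 1) / fact r * \<alpha> ^ (r - 1)))"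
      unfolding sum_distrib_left
      by (intro Bochner_Integration.integrable_sum)
         (simp add: mult.left_commute[of "post_weight n _"] integrable_post_weight_moment)
    show "integrable lborel (\<lambda>\<alpha>. 16 * \<eta> * exp (16 * \<eta>) * (post_weight n \<alpha> * \<alpha> ^ 0) + 16 * M \<alpha> / p)"
      unfolding M_def using integrable_exp_moment integrable_post_weight_moment[of n 0] by simp
  qed (use post_weight_mult_moment_weights_le[OF \<eta>] in \<open>simp add: M_def p_def\<close>)
  also have "\<dots> = 16 * \<eta> * exp (16 * \<eta>) * moment n 0 + 16 * exp_moment / p"
    using integrable_exp_moment integrable_post_weight_moment[of n 0]
    by (simp add: moment_def exp_moment_def M_def)
  finally show ?thesis by (simp add: p_def)
qed

lemma tail_moment_nonneg: "tail_moment n \<ge> 0"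
  unfolding tail_moment_def by (intro sum_nonneg mult_nonneg_nonneg moment_nonneg) auto

lemma exp_moment_nonneg: "exp_moment \<ge> 0"
  unfolding exp_moment_def
  by (intro integral_nonneg_AE AE_I2) (auto split: split_indicator intro!: mult_nonneg_nonneg prior_nonneg)

(* The mass of \<pi> on (0, \<eta> / 2) bounds moment n 0 from below, and the pochhammer ratio decays. *)
lemma tail_moment_ratio_le:
  assumes \<eta>: "0 < \<eta>" "\<eta> \<le> \<epsilon>" "\<eta> \<le> 1"
  shows "tail_moment n / moment n 0
       \<le> 16 * \<eta> * exp (16 * \<eta>) + 16 * exp_moment / mass_below (\<eta> / 2) * exp (- (\<eta> / 4) * harm (n - 1))"
proof -
  define p1 where "p1 = pochhammer (\<eta> / 2 + 1) (n - 1)"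
  define p2 where "p2 = pochhammer (\<eta> + 1) (n - 1)"
  have pos: "p1 > 0" "p2 > 0" "mass_below (\<eta> / 2) > 0" "moment n 0 > 0"
    using \<eta> by (auto simp: p1_def p2_def intro!: pochhammer_pos mass_below_pos moment_0_pos)
  have "tail_moment n / moment n 0
      \<le> (16 * \<eta> * exp (16 * \<eta>) * moment n 0 + 16 * exp_moment / p2) / moment n 0"
    using tail_moment_le[OF \<eta>(1), of n] pos by (intro divide_right_mono) (auto simp: p2_def)
  also have "\<dots> = 16 * \<eta> * exp (16 * \<eta>) + (16 * exp_moment / p2) / moment n 0"
    using pos by (simp add: add_divide_distrib)
  also have "(16 * exp_moment / p2) / moment n 0 \<le> (16 * exp_moment / p2) / (mass_below (\<eta> / 2) / p1)"
    using moment_0_ge[of "\<eta> / 2" n] pos exp_moment_nonneg \<eta>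
    by (intro divide_left_mono) (auto simp: p1_def)
  also have "\<dots> = 16 * exp_moment / mass_below (\<eta> / 2) * (p1 / p2)"
    using pos by (simp add: field_simps)
  also have "\<dots> \<le> 16 * exp_moment / mass_below (\<eta> / 2) * exp (- (\<eta> / 4) * harm (n - 1))"
    using pochhammer_ratio_le[OF \<eta>(1,3)] pos exp_moment_nonneg
    by (intro mult_left_mono) (auto simp: p1_def p2_def)
  finally show ?thesis by simp
qed

lemma tail_moment_ratio_tendsto: "(\<lambda>n. tail_moment n / moment n 0) \<longlonglongrightarrow> 0"
proof (rule tendstoI)
  fix e :: real assume e: "e > 0"
  define \<eta> where "\<eta> = min \<epsilon> (min 1 (e / (64 * exp 16)))"
  have \<eta>: "0 < \<eta>" "\<eta> \<le> \<epsilon>" "\<eta> \<le> 1" "\<eta> \<le> e / (64 * exp 16)"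
    using e \<epsilon>_pos by (auto simp: \<eta>_def)
  have "16 * \<eta> * exp (16 * \<eta>) \<le> 16 * (e / (64 * exp 16)) * exp 16"
    using \<eta> by (intro mult_mono) auto
  then have small: "16 * \<eta> * exp (16 * \<eta>) \<le> e / 4" by simp
  define K where "K = 16 * exp_moment / mass_below (\<eta> / 2)"
  have "(\<lambda>n. K * exp (- (\<eta> / 4) * harm (n - 1))) \<longlonglongrightarrow> 0"
    using tendsto_mult_right_zero[OF seq_offset_neg[OF tendsto_exp_neg_harm[OF \<eta>(1)]]] by simp
  then have "eventually (\<lambda>n. K * exp (- (\<eta> / 4) * harm (n - 1)) < e / 2) sequentially"
    using e by (intro order_tendstoD) auto
  then show "eventually (\<lambda>n. dist (tail_moment n / moment n 0) 0 < e) sequentially"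
  proof (rule eventually_mono)
    fix n assume "K * exp (- (\<eta> / 4) * harm (n - 1)) < e / 2"
    moreover have "tail_moment n / moment n 0 \<ge> 0"
      by (intro divide_nonneg_nonneg tail_moment_nonneg less_imp_le[OF moment_0_pos])
    ultimately show "dist (tail_moment n / moment n 0) 0 < e"
      using tail_moment_ratio_le[OF \<eta>(1-3), of n] small e by (simp add: dist_real_def K_def)
  qed
qed

theorem post_K_1_tendsto: "(\<lambda>n. post_K \<pi> (\<lambda>i. \<theta>) n 1) \<longlonglongrightarrow> 1"
proof -
  have "eventually (\<lambda>n. norm (post_K \<pi> (\<lambda>i. \<theta>) n 1 - 1) \<le> tail_moment n / moment n 0) sequentially"
    using eventually_ge_at_top[of 1]
  proof eventually_elim
    case (elim n)
    have "\<bar>post_K \<pi> (\<lambda>i. \<theta>) n 1 - 1\<bar> \<le> tail_moment n / moment n (1 - 1)"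
      unfolding tail_moment_def
    proof (rule post_K_const_1_error_le)
      show "(LINT \<alpha>:{0<..}|lborel. \<alpha> ^ s / pochhammer \<alpha> n * \<pi> \<alpha>) = moment n (s - 1)" if "s \<ge> 1" for s
        using elim that by (rule prior_factor_eq_moment)
    qed (use elim moment_0_pos moment_nonneg in auto)
    then show ?case by simp
  qed
  then have "(\<lambda>n. post_K \<pi> (\<lambda>i. \<theta>) n 1 - 1) \<longlonglongrightarrow> 0"
    by (rule Lim_null_comparison[OF _ tail_moment_ratio_tendsto])
  then show ?thesis by (simp add: LIM_zero_iff)
qed

end

theorem theorem3:
  fixes \<pi> :: "real \<Rightarrow> real" and \<theta>star :: real
  assumes A1_meas: "\<pi> \<in> borel_measurable lborel"
    and A1_nonneg: "\<And>\<alpha>. \<alpha> > 0 \<Longrightarrow> \<pi> \<alpha> \<ge> 0"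
    and A1_prob: "(\<integral>\<^sup>+ \<alpha>. ennreal (\<pi> \<alpha>) * indicator {0<..} \<alpha> \<partial>lborel) = 1"
    and A2: "\<exists>\<epsilon> \<delta> \<beta>. \<epsilon> > 0 \<and> \<delta> > 0 \<and>
              (\<forall>\<alpha>. 0 < \<alpha> \<and> \<alpha> < \<epsilon> \<longrightarrow>
                 (1 / \<delta>) * \<alpha> powr \<beta> \<le> \<pi> \<alpha> \<and> \<pi> \<alpha> \<le> \<delta> * \<alpha> powr \<beta>)"
    and A3: "\<exists>D \<nu> \<rho>. D > 0 \<and> \<nu> > 0 \<and> \<rho> > 16 \<and>
              (\<forall>s::nat. s \<ge> 1 \<longrightarrow>
                 (\<integral>\<^sup>+ \<alpha>. ennreal (\<alpha> ^ s * \<pi> \<alpha>) * indicator {0<..} \<alpha> \<partial>lborel)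
                   < ennreal (D * \<rho> powr (- real s) * Gamma (\<nu> + real s + 1)))"
  shows "(\<lambda>n. post_K \<pi> (\<lambda>i. \<theta>star) n 1) \<longlonglongrightarrow> 1"
proof -
  obtain \<epsilon> \<delta> \<beta> where \<epsilon>: "\<epsilon> > 0" and \<delta>: "\<delta> > 0"
    and lower: "\<And>\<alpha>. 0 < \<alpha> \<Longrightarrow> \<alpha> < \<epsilon> \<Longrightarrow> (1 / \<delta>) * \<alpha> powr \<beta> \<le> \<pi> \<alpha>"
    using A2 by blast
  obtain D \<nu> \<rho> where D: "D > 0" and \<nu>: "\<nu> > 0" and \<rho>: "\<rho> > 16"
    and moments: "\<And>s::nat. s \<ge> 1 \<Longrightarrow>
      (\<integral>\<^sup>+ \<alpha>. ennreal (\<alpha> ^ s * \<pi> \<alpha>) * indicator {0<..} \<alpha> \<partial>lborel)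
        < ennreal (D * \<rho> powr (- real s) * Gamma (\<nu> + real s + 1))"
    using A3 by blast
  have meas: "\<pi> \<in> borel_measurable borel" using A1_meas by simp
  (* of A2 only the lower bound is needed, to make \<pi> positive near 0 *)
  interpret concentration_prior \<pi> \<epsilon>
  proof
    have "(\<integral>\<^sup>+ \<alpha>. ennreal (\<pi> \<alpha>) * indicator {0<..} \<alpha> \<partial>lborel) < \<infinity>"
      by (simp add: A1_prob)
    then show "integrable lborel (\<lambda>\<alpha>. indicator {0<..} \<alpha> * \<pi> \<alpha>)"
      using A1_nonneg by (intro integrable_prior_density[OF meas]) auto
    show "integrable lborel (\<lambda>\<alpha>. indicator {0<..} \<alpha> * \<pi> \<alpha> * (\<alpha> * exp (16 * \<alpha>)))"
      using A1_nonneg moments by (intro integrable_exp_moment_of_gamma_moments[OF meas _ D \<nu> \<rho>]) auto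
    show "\<pi> \<alpha> > 0" if "0 < \<alpha>" "\<alpha> < \<epsilon>" for \<alpha>
      using lower[OF that] that \<delta> by (smt (verit) divide_pos_pos powr_gt_zero mult_pos_pos)
  qed (use meas A1_nonneg \<epsilon> in auto)
  show ?thesis by (rule post_K_1_tendsto)
qed

end
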